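(* Let $B\neq\emptyset$ be an event (a union of elements of $\Pi$) and let $X|B$ be a conditional gamble. Let $I\subset\mathbb{R}$ be an interval containing the image set $\{X(\omega):\omega\in\Pi,\ \omega\Rightarrow B\}$ of $X|B$, let $\phi:I\to\mathbb{R}$ be convex and $\psi:I\to\mathbb{R}$ be concave. Let $\mu$ be a real-valued uncertainty measure defined on the conditional gambles given $B$ (in particular on $X|B$ and on all gambles to which $\mu$ is applied below), satisfying axioms (M), (T), (PH), and let $\overline{\mu}$ be its conjugate, $\overline{\mu}(Y|B)=-\mu(-Y|B)$. Assume $\mu(X|B)$ is an interior point of $I$. (a) Let $J_\phi=[\phi'_-(\mu(X|B)),\phi'_+(\mu(X|B))]$. If there is $\lambda\in J_\phi$ with $\lambda\ge 0$, then $\mu(\phi(X|B))\ge\phi(\mu(X|B))$. If there is $\lambda\in J_\phi$ with $\lambda\le 0$, then $\overline{\mu}(\phi(X|B))\ge\phi(\mu(X|B))$. (b) Let $J_\psi=[\psi'_+(\mu(X|B)),\psi'_-(\mu(X|B))]$. If there is $\lambda\in J_\psi$ with $\lambda\ge 0$, then $\mu(\psi(X|B))\le\psi(\mu(X|B))$. If there is $\lambda\in J_\psi$ with $\lambda\le 0$, then $\overline{\mu}(\psi(X|B))\le\psi(\mu(X|B))$.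
   Context: $\Pi$ is a partition of the sure event into pairwise disjoint non-impossible events (possibly infinitely many); a gamble is a bounded map $X:\Pi\to\mathbb{R}$. For an event $B\neq\emptyset$ that is a union of elements of $\Pi$, the conditional gamble $X|B$ is the restriction of $X$ to the elements $\omega\in\Pi$ with $\omega\Rightarrow B$; for a real function $f$ defined on its image set, $f(X|B)$ is the conditional gamble $\omega\mapsto f(X(\omega))$ on those $\omega$. Axioms for $\mu$ (for all conditional gambles $X|B,Y|B$): (M) if $X|B\ge Y|B$ then $\mu(X|B)\ge\mu(Y|B)$; (T) $\mu(X+a|B)=\mu(X|B)+a$ for all $a\in\mathbb{R}$; (PH) $\mu(\lambda X|B)=\lambda\mu(X|B)$ for all $\lambda\ge 0$. $f'_+(x)$ and $f'_-(x)$ denote the right and left derivatives of $f$ at $x$. *)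

theory Defs
  imports "HOL-Analysis.Analysis"
begin

text \<open>Elements of the partition \<Pi> are modelled by the type 'w; an event B that is a
  union of elements of \<Pi> is a set of elements of type 'w.  A conditional gamble X|B is
  represented by a function X :: 'w \<Rightarrow> real, of which only the values on B matter;
  it is a (conditional) gamble when it is bounded on B.\<close>

definition cgamble :: "'w set \<Rightarrow> ('w \<Rightarrow> real) \<Rightarrow> bool" where
  "cgamble B X \<longleftrightarrow> bounded (X ` B)"

text \<open>Axioms (M), (T), (PH) for a real-valued uncertainty measure on the conditional
  gambles given B.\<close>

definition unc_measure :: "'w set \<Rightarrow> (('w \<Rightarrow> real) \<Rightarrow> real) \<Rightarrow> bool" where
  "unc_measure B \<mu> \<longleftrightarrow>
     (\<forall>X Y. cgamble B X \<longrightarrow> cgamble B Y \<longrightarrow> (\<forall>w\<in>B. X w \<ge> Y w) \<longrightarrow> \<mu> X \<ge> \<mu> Y) \<and>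
     (\<forall>X a. cgamble B X \<longrightarrow> \<mu> (\<lambda>w. X w + a) = \<mu> X + a) \<and>
     (\<forall>X l. cgamble B X \<longrightarrow> l \<ge> 0 \<longrightarrow> \<mu> (\<lambda>w. l * X w) = l * \<mu> X)"

definition conj_measure :: "(('w \<Rightarrow> real) \<Rightarrow> real) \<Rightarrow> ('w \<Rightarrow> real) \<Rightarrow> real" where
  "conj_measure \<mu> Y = - \<mu> (\<lambda>w. - Y w)"

definition right_deriv :: "(real \<Rightarrow> real) \<Rightarrow> real \<Rightarrow> real" where
  "right_deriv f x = Lim (at_right x) (\<lambda>y. (f y - f x) / (y - x))"

definition left_deriv :: "(real \<Rightarrow> real) \<Rightarrow> real \<Rightarrow> real" where
  "left_deriv f x = Lim (at_left x) (\<lambda>y. (f y - f x) / (y - x))"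

end

theory Submission
  imports Defs
begin

(* At an interior point m = \<mu> X the difference quotients of a convex \<phi> are monotone on
  either side of m, so both one-sided derivatives exist, and \<phi> lies above its supporting line
  \<phi> m + l (x - m) for every slope l between them. Thus \<phi> o X dominates the affine gamble
  l X + (\<phi> m - l m) on B. By (M), (T) and (PH), \<mu> sends that gamble to l \<mu> X + \<phi> m - l m = \<phi> m
  when l \<ge> 0; when l \<le> 0 the conjugate does, being monotone with
  conj_measure \<mu> (l X + c) = - \<mu> ((- l) X - c). Concave \<psi> is the mirror image. *)

lemma convex_on_slope_mono:
  fixes f :: "real \<Rightarrow> real"
  assumes f: "convex_on I f" and I: "x \<in> I" "a \<in> I" "b \<in> I"
    and "a \<le> b" "a \<noteq> x" "b \<noteq> x"
  shows "(f a - f x) / (a - x) \<le> (f b - f x) / (b - x)"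
proof -
  have swap: "(f u - f v) / (u - v) = (f v - f u) / (v - u)" for u v
    by (metis minus_diff_eq minus_divide_divide)
  consider "a = b" | "x < a" "a < b" | "a < b" "b < x" | "a < x" "x < b"
    using assms(5-7) by linarith
  then show ?thesis
  proof cases
    case 2
    then show ?thesis using convex_on_slope_le(1)[OF f I(1,3) 2] by (simp add: swap[of _ x])
  next
    case 3
    then show ?thesis using convex_on_slope_le(2)[OF f I(2,1) 3] by simp
  next
    case 4
    then show ?thesis using convex_on_slope_le[OF f I(2,3) 4] by (simp add: swap[of b])
  qed simp
qed

lemma convex_on_slopes_bdd:
  fixes f :: "real \<Rightarrow> real"
  assumes f: "convex_on I f" and x: "x \<in> interior I"
  shows "bdd_below ((\<lambda>y. (f y - f x) / (y - x)) ` ({x<..} \<inter> I))"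
    and "bdd_above ((\<lambda>y. (f y - f x) / (y - x)) ` ({..<x} \<inter> I))"
proof -
  obtain e where "e > 0" "ball x e \<subseteq> I"
    using x mem_interior by blast
  then have a: "x - e/2 \<in> I" and b: "x + e/2 \<in> I"
    by (auto simp: dist_real_def subset_iff)
  have xI: "x \<in> I"
    using x interior_subset by blast
  show "bdd_below ((\<lambda>y. (f y - f x) / (y - x)) ` ({x<..} \<inter> I))"
    using convex_on_slope_mono[OF f xI a] \<open>e > 0\<close>
    by (intro bdd_belowI2[where m = "(f (x - e/2) - f x) / (x - e/2 - x)"]) auto
  show "bdd_above ((\<lambda>y. (f y - f x) / (y - x)) ` ({..<x} \<inter> I))"
    using convex_on_slope_mono[OF f xI _ b] \<open>e > 0\<close>
    by (intro bdd_aboveI2[where M = "(f (x + e/2) - f x) / (x + e/2 - x)"]) auto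
qed

lemma right_deriv_eqI:
  "((\<lambda>y. (f y - f x) / (y - x)) \<longlongrightarrow> D) (at_right x) \<Longrightarrow> right_deriv f x = D"
  unfolding right_deriv_def by (rule tendsto_Lim[OF trivial_limit_at_right_real])

lemma left_deriv_eqI:
  "((\<lambda>y. (f y - f x) / (y - x)) \<longlongrightarrow> D) (at_left x) \<Longrightarrow> left_deriv f x = D"
  unfolding left_deriv_def by (rule tendsto_Lim[OF trivial_limit_at_left_real])

lemma convex_on_has_right_deriv:
  fixes f :: "real \<Rightarrow> real"
  assumes f: "convex_on I f" and x: "x \<in> interior I"
  shows "((\<lambda>y. (f y - f x) / (y - x)) \<longlongrightarrow> right_deriv f x) (at_right x)"
proof -
  let ?q = "\<lambda>y. (f y - f x) / (y - x)"
  have xI: "x \<in> I"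
    using x interior_subset by blast
  obtain K where K: "\<And>y. y \<in> {x<..} \<inter> I \<Longrightarrow> K \<le> ?q y"
    using convex_on_slopes_bdd(1)[OF f x] by (auto simp: bdd_below_def)
  have "(?q \<longlongrightarrow> Inf (?q ` ({x<..} \<inter> I))) (at x within ({x<..} \<inter> I))"
    by (rule Lim_right_bound) (use K convex_on_slope_mono[OF f xI] in auto)
  moreover have "at x within ({x<..} \<inter> I) = at_right x"
    by (rule at_within_nhd[of x "interior I"]) (use x interior_subset in auto)
  ultimately have "(?q \<longlongrightarrow> Inf (?q ` ({x<..} \<inter> I))) (at_right x)"
    by simp
  then show ?thesis
    using right_deriv_eqI by metis
qed

lemma convex_on_has_left_deriv:
  fixes f :: "real \<Rightarrow> real"
  assumes f: "convex_on I f" and x: "x \<in> interior I"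
  shows "((\<lambda>y. (f y - f x) / (y - x)) \<longlongrightarrow> left_deriv f x) (at_left x)"
proof -
  let ?q = "\<lambda>y. (f y - f x) / (y - x)"
  have xI: "x \<in> I"
    using x interior_subset by blast
  obtain K where K: "\<And>y. y \<in> {..<x} \<inter> I \<Longrightarrow> ?q y \<le> K"
    using convex_on_slopes_bdd(2)[OF f x] by (auto simp: bdd_above_def)
  have "(?q \<longlongrightarrow> Sup (?q ` ({..<x} \<inter> I))) (at x within ({..<x} \<inter> I))"
    by (rule Lim_left_bound) (use K convex_on_slope_mono[OF f xI] in auto)
  moreover have "at x within ({..<x} \<inter> I) = at_left x"
    by (rule at_within_nhd[of x "interior I"]) (use x interior_subset in auto)
  ultimately have "(?q \<longlongrightarrow> Sup (?q ` ({..<x} \<inter> I))) (at_left x)"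
    by simp
  then show ?thesis
    using left_deriv_eqI by metis
qed

lemma convex_on_right_deriv_le_slope:
  fixes f :: "real \<Rightarrow> real"
  assumes f: "convex_on I f" and x: "x \<in> interior I" and y: "y \<in> I" "x < y"
  shows "right_deriv f x \<le> (f y - f x) / (y - x)"
proof (rule tendsto_upperbound[OF convex_on_has_right_deriv[OF f x]])
  have xI: "x \<in> I"
    using x interior_subset by blast
  have "is_interval I"
    using convex_on_imp_convex[OF f] by (simp add: is_interval_convex_1)
  then have "(f z - f x) / (z - x) \<le> (f y - f x) / (y - x)" if "z \<in> {x<..<y}" for z
  proof -
    have "z \<in> I"
      using mem_is_interval_1_I[OF \<open>is_interval I\<close> xI y(1)] that by simp
    then show ?thesis
      using that by (intro convex_on_slope_mono[OF f xI _ y(1)]) auto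
  qed
  then show "\<forall>\<^sub>F z in at_right x. (f z - f x) / (z - x) \<le> (f y - f x) / (y - x)"
    using eventually_at_right_real[OF \<open>x < y\<close>] by (rule eventually_mono[rotated])
qed simp

lemma convex_on_slope_le_left_deriv:
  fixes f :: "real \<Rightarrow> real"
  assumes f: "convex_on I f" and x: "x \<in> interior I" and y: "y \<in> I" "y < x"
  shows "(f y - f x) / (y - x) \<le> left_deriv f x"
proof (rule tendsto_lowerbound[OF convex_on_has_left_deriv[OF f x]])
  have xI: "x \<in> I"
    using x interior_subset by blast
  have "is_interval I"
    using convex_on_imp_convex[OF f] by (simp add: is_interval_convex_1)
  then have "(f y - f x) / (y - x) \<le> (f z - f x) / (z - x)" if "z \<in> {y<..<x}" for z
  proof -
    have "z \<in> I"
      using mem_is_interval_1_I[OF \<open>is_interval I\<close> y(1) xI] that by simp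
    then show ?thesis
      using that by (intro convex_on_slope_mono[OF f xI y(1)]) auto
  qed
  then show "\<forall>\<^sub>F z in at_left x. (f y - f x) / (y - x) \<le> (f z - f x) / (z - x)"
    using eventually_at_left_real[OF \<open>y < x\<close>] by (rule eventually_mono[rotated])
qed simp

lemma convex_on_supporting_line:
  fixes f :: "real \<Rightarrow> real"
  assumes f: "convex_on I f" and m: "m \<in> interior I"
    and l: "left_deriv f m \<le> l" "l \<le> right_deriv f m" and x: "x \<in> I"
  shows "f m + l * (x - m) \<le> f x"
proof (cases x m rule: linorder_cases)
  case greater
  then have "l \<le> (f x - f m) / (x - m)"
    using convex_on_right_deriv_le_slope[OF f m x] l(2) by linarith
  then show ?thesis
    using greater by (simp add: le_divide_eq algebra_simps)
next
  case less
  then have "(f x - f m) / (x - m) \<le> l"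
    using convex_on_slope_le_left_deriv[OF f m x] l(1) by linarith
  then show ?thesis
    using less by (simp add: divide_le_eq algebra_simps)
qed simp

lemma right_deriv_uminus:
  assumes "((\<lambda>y. (f y - f x) / (y - x)) \<longlongrightarrow> right_deriv f x) (at_right x)"
  shows "right_deriv (\<lambda>y. - f y) x = - right_deriv f x"
proof (rule right_deriv_eqI)
  show "((\<lambda>y. (- f y - - f x) / (y - x)) \<longlongrightarrow> - right_deriv f x) (at_right x)"
    using tendsto_minus[OF assms] by (simp add: diff_divide_distrib)
qed

lemma left_deriv_uminus:
  assumes "((\<lambda>y. (f y - f x) / (y - x)) \<longlongrightarrow> left_deriv f x) (at_left x)"
  shows "left_deriv (\<lambda>y. - f y) x = - left_deriv f x"
proof (rule left_deriv_eqI)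
  show "((\<lambda>y. (- f y - - f x) / (y - x)) \<longlongrightarrow> - left_deriv f x) (at_left x)"
    using tendsto_minus[OF assms] by (simp add: diff_divide_distrib)
qed

lemma concave_on_supporting_line:
  fixes f :: "real \<Rightarrow> real"
  assumes f: "concave_on I f" and m: "m \<in> interior I"
    and l: "right_deriv f m \<le> l" "l \<le> left_deriv f m" and x: "x \<in> I"
  shows "f x \<le> f m + l * (x - m)"
proof -
  let ?g = "\<lambda>y. - f y"
  have g: "convex_on I ?g"
    using f by (simp add: concave_on_def)
  have "right_deriv f m = - right_deriv ?g m" "left_deriv f m = - left_deriv ?g m"
    using right_deriv_uminus[OF convex_on_has_right_deriv[OF g m]]
      left_deriv_uminus[OF convex_on_has_left_deriv[OF g m]] by simp_all
  then have "?g m + (- l) * (x - m) \<le> ?g x"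
    using l by (intro convex_on_supporting_line[OF g m _ _ x]) simp_all
  then show ?thesis
    by simp
qed

lemma cgamble_affine:
  assumes "cgamble B Y"
  shows "cgamble B (\<lambda>w. l * Y w + c)"
proof -
  obtain M where M: "\<And>w. w \<in> B \<Longrightarrow> \<bar>Y w\<bar> \<le> M"
    using assms unfolding cgamble_def bounded_iff by auto
  have "\<bar>l * Y w + c\<bar> \<le> \<bar>l\<bar> * M + \<bar>c\<bar>" if "w \<in> B" for w
    using mult_left_mono[OF M[OF that], of "\<bar>l\<bar>"] abs_triangle_ineq[of "l * Y w" c]
    by (simp add: abs_mult)
  then show ?thesis
    unfolding cgamble_def bounded_iff by auto
qed

lemma cgamble_uminus:
  assumes "cgamble B Y"
  shows "cgamble B (\<lambda>w. - Y w)"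
  using cgamble_affine[OF assms, of "-1" 0] by simp

lemma unc_measure_mono:
  assumes "unc_measure B \<mu>" "cgamble B X" "cgamble B Y" "\<And>w. w \<in> B \<Longrightarrow> X w \<le> Y w"
  shows "\<mu> X \<le> \<mu> Y"
  using assms unfolding unc_measure_def by blast

lemma unc_measure_affine:
  assumes \<mu>: "unc_measure B \<mu>" and X: "cgamble B X" and "l \<ge> 0"
  shows "\<mu> (\<lambda>w. l * X w + c) = l * \<mu> X + c"
proof -
  have "\<mu> (\<lambda>w. l * X w + c) = \<mu> (\<lambda>w. l * X w) + c"
    using \<mu> cgamble_affine[OF X, of l 0] unfolding unc_measure_def by simp
  also have "\<dots> = l * \<mu> X + c"
    using \<mu> X \<open>l \<ge> 0\<close> unfolding unc_measure_def by simp
  finally show ?thesis .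
qed

lemma unc_measure_affine_minorant:
  assumes \<mu>: "unc_measure B \<mu>" and X: "cgamble B X" and Y: "cgamble B Y"
    and "l \<ge> 0" and minorant: "\<And>w. w \<in> B \<Longrightarrow> l * X w + c \<le> Y w"
  shows "l * \<mu> X + c \<le> \<mu> Y"
proof -
  have "l * \<mu> X + c = \<mu> (\<lambda>w. l * X w + c)"
    using unc_measure_affine[OF \<mu> X \<open>l \<ge> 0\<close>] by simp
  also have "\<dots> \<le> \<mu> Y"
    using unc_measure_mono[OF \<mu> cgamble_affine[OF X] Y] minorant by simp
  finally show ?thesis .
qed

lemma conj_measure_affine_minorant:
  assumes \<mu>: "unc_measure B \<mu>" and X: "cgamble B X" and Y: "cgamble B Y"
    and "l \<le> 0" and minorant: "\<And>w. w \<in> B \<Longrightarrow> l * X w + c \<le> Y w"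
  shows "l * \<mu> X + c \<le> conj_measure \<mu> Y"
proof -
  have "\<mu> (\<lambda>w. - Y w) \<le> \<mu> (\<lambda>w. (- l) * X w + (- c))"
  proof (rule unc_measure_mono[OF \<mu> cgamble_uminus[OF Y] cgamble_affine[OF X]])
    show "- Y w \<le> (- l) * X w + (- c)" if "w \<in> B" for w
      using minorant[OF that] by simp
  qed
  also have "\<dots> = - l * \<mu> X - c"
    using unc_measure_affine[OF \<mu> X, of "- l" "- c"] \<open>l \<le> 0\<close> by simp
  finally show ?thesis
    unfolding conj_measure_def by simp
qed

lemma unc_measure_affine_majorant:
  assumes \<mu>: "unc_measure B \<mu>" and X: "cgamble B X" and Y: "cgamble B Y"
    and "l \<ge> 0" and majorant: "\<And>w. w \<in> B \<Longrightarrow> Y w \<le> l * X w + c"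
  shows "\<mu> Y \<le> l * \<mu> X + c"
proof -
  have "(- l) * \<mu> X + (- c) \<le> conj_measure \<mu> (\<lambda>w. - Y w)"
  proof (rule conj_measure_affine_minorant[OF \<mu> X cgamble_uminus[OF Y]])
    show "(- l) * X w + (- c) \<le> - Y w" if "w \<in> B" for w
      using majorant[OF that] by simp
  qed (use \<open>l \<ge> 0\<close> in simp)
  then show ?thesis
    unfolding conj_measure_def by simp
qed

lemma conj_measure_affine_majorant:
  assumes \<mu>: "unc_measure B \<mu>" and X: "cgamble B X" and Y: "cgamble B Y"
    and "l \<le> 0" and majorant: "\<And>w. w \<in> B \<Longrightarrow> Y w \<le> l * X w + c"
  shows "conj_measure \<mu> Y \<le> l * \<mu> X + c"
proof -
  have "(- l) * \<mu> X + (- c) \<le> \<mu> (\<lambda>w. - Y w)"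
  proof (rule unc_measure_affine_minorant[OF \<mu> X cgamble_uminus[OF Y]])
    show "(- l) * X w + (- c) \<le> - Y w" if "w \<in> B" for w
      using majorant[OF that] by simp
  qed (use \<open>l \<le> 0\<close> in simp)
  then show ?thesis
    unfolding conj_measure_def by simp
qed

theorem theorem3:
  fixes B :: "'w set" and X :: "'w \<Rightarrow> real" and I :: "real set"
    and \<phi> \<psi> :: "real \<Rightarrow> real" and \<mu> :: "('w \<Rightarrow> real) \<Rightarrow> real"
  assumes B_ne: "B \<noteq> {}"
    and X_gamble: "bounded (range X)"
    and I_int: "is_interval I"
    and X_in_I: "X ` B \<subseteq> I"
    and phi_conv: "convex_on I \<phi>"
    and psi_conc: "concave_on I \<psi>"
    and phi_gamble: "cgamble B (\<lambda>w. \<phi> (X w))"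
    and psi_gamble: "cgamble B (\<lambda>w. \<psi> (X w))"
    and mu: "unc_measure B \<mu>"
    and interior: "\<mu> X \<in> interior I"
  shows "((\<exists>l. left_deriv \<phi> (\<mu> X) \<le> l \<and> l \<le> right_deriv \<phi> (\<mu> X) \<and> l \<ge> 0)
            \<longrightarrow> \<mu> (\<lambda>w. \<phi> (X w)) \<ge> \<phi> (\<mu> X)) \<and>
         ((\<exists>l. left_deriv \<phi> (\<mu> X) \<le> l \<and> l \<le> right_deriv \<phi> (\<mu> X) \<and> l \<le> 0)
            \<longrightarrow> conj_measure \<mu> (\<lambda>w. \<phi> (X w)) \<ge> \<phi> (\<mu> X)) \<and>
         ((\<exists>l. right_deriv \<psi> (\<mu> X) \<le> l \<and> l \<le> left_deriv \<psi> (\<mu> X) \<and> l \<ge> 0)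
            \<longrightarrow> \<mu> (\<lambda>w. \<psi> (X w)) \<le> \<psi> (\<mu> X)) \<and>
         ((\<exists>l. right_deriv \<psi> (\<mu> X) \<le> l \<and> l \<le> left_deriv \<psi> (\<mu> X) \<and> l \<le> 0)
            \<longrightarrow> conj_measure \<mu> (\<lambda>w. \<psi> (X w)) \<le> \<psi> (\<mu> X))"
proof -
  let ?m = "\<mu> X"
  have Xg: "cgamble B X"
    unfolding cgamble_def using X_gamble by (rule bounded_subset) auto
  have XI: "X w \<in> I" if "w \<in> B" for w
    using X_in_I that by blast
  have phi_support: "l * X w + (\<phi> ?m - l * ?m) \<le> \<phi> (X w)"
    if "left_deriv \<phi> ?m \<le> l" "l \<le> right_deriv \<phi> ?m" "w \<in> B" for l w
    using convex_on_supporting_line[OF phi_conv interior that(1,2) XI[OF that(3)]]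
    by (simp add: algebra_simps)
  have psi_support: "\<psi> (X w) \<le> l * X w + (\<psi> ?m - l * ?m)"
    if "right_deriv \<psi> ?m \<le> l" "l \<le> left_deriv \<psi> ?m" "w \<in> B" for l w
    using concave_on_supporting_line[OF psi_conc interior that(1,2) XI[OF that(3)]]
    by (simp add: algebra_simps)
  show ?thesis
  proof (intro conjI impI; elim exE conjE)
    fix l assume l: "left_deriv \<phi> ?m \<le> l" "l \<le> right_deriv \<phi> ?m" "0 \<le> l"
    show "\<phi> ?m \<le> \<mu> (\<lambda>w. \<phi> (X w))"
      using unc_measure_affine_minorant[OF mu Xg phi_gamble l(3) phi_support[OF l(1,2)]] by simp
  next
    fix l assume l: "left_deriv \<phi> ?m \<le> l" "l \<le> right_deriv \<phi> ?m" "l \<le> 0"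
    show "\<phi> ?m \<le> conj_measure \<mu> (\<lambda>w. \<phi> (X w))"
      using conj_measure_affine_minorant[OF mu Xg phi_gamble l(3) phi_support[OF l(1,2)]] by simp
  next
    fix l assume l: "right_deriv \<psi> ?m \<le> l" "l \<le> left_deriv \<psi> ?m" "0 \<le> l"
    show "\<mu> (\<lambda>w. \<psi> (X w)) \<le> \<psi> ?m"
      using unc_measure_affine_majorant[OF mu Xg psi_gamble l(3) psi_support[OF l(1,2)]] by simp
  next
    fix l assume l: "right_deriv \<psi> ?m \<le> l" "l \<le> left_deriv \<psi> ?m" "l \<le> 0"
    show "conj_measure \<mu> (\<lambda>w. \<psi> (X w)) \<le> \<psi> ?m"
      using conj_measure_affine_majorant[OF mu Xg psi_gamble l(3) psi_support[OF l(1,2)]] by simp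
  qed
qed

end
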